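(* Let $H$ be a near-quadrangulation and let $G$ be the patch extension of $H$. If a viable 4-coloring $\varphi$ of the boundary of the outer face of $G$ extends to a 4-coloring of $G$, then $\varphi$ is null-homotopic on the cycle $C$ bounding the outer face of $G$.
   Context: A near-quadrangulation is a 2-connected plane graph all of whose faces other than the outer one have length four (it is bipartite). The patch extension of a 2-connected bipartite plane graph $B$ is the hued plane graph obtained by adding into each non-outer face of $B$ a new vertex adjacent to all vertices on the boundary of that face; the vertices of $B$ get hues $0$ and $1$ according to the bipartition and the new vertices get hue $2$. Hues are values in $\mathbb{Z}_3$; a 4-coloring is a proper coloring with colors in $\mathbb{Z}_2^2$; for a hued graph $K$ and 4-coloring $\varphi$, $K^\varphi$ is the graph with both hue and color. Homomorphisms to $\mathbf{T}$ map adjacent vertices to adjacent vertices and preserve hue and color, where the dappled triangular grid $\mathbf{T}$ has vertex set $\mathbb{Z}^2$, with $(i_1,j_1),(i_2,j_2)$ adjacent iff $(i_2-i_1,j_2-j_1)\in\{\pm(1,0),\pm(0,1),\pm(1,1)\}$, hue $(i+j)\bmod 3$ and color $(i\bmod 2,j\bmod 2)$. $\varphi$ is viable on connected hued $K$ if $K^\varphi$ has a homomorphism to $\mathbf{T}$. For a closed walk $Z$, a one-step retraction deletes $u_{i+1},u_{i+2}$ from a cyclically consecutive triple $u_iu_{i+1}u_{i+2}$ with $u_i=u_{i+2}$ (length-two closed walks retract to empty); $Z$ is null-homotopic if repeated one-step retractions reduce it to the empty walk. A viable coloring $\varphi$ is null-homotopic on a closed walk (here the cycle $C$) if the closed walks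 $f(C)$, for homomorphisms $f$ from $C^\varphi$ to $\mathbf{T}$, are null-homotopic. *)

theory Defs
  imports Main
begin

text \<open>A plane graph is given combinatorially by its facial boundary walks:
  C is the boundary walk of the outer face, Fs the set of boundary walks of
  the inner faces (each a list of vertices, read cyclically).\<close>

definition darts :: "'a list \<Rightarrow> ('a \<times> 'a) set" where
  "darts w = {(w ! i, w ! (Suc i mod length w)) | i. i < length w}"

definition map_darts :: "'a list \<Rightarrow> 'a list set \<Rightarrow> ('a \<times> 'a) set" where
  "map_darts C Fs = \<Union> (darts ` insert C Fs)"

definition map_verts :: "'a list \<Rightarrow> 'a list set \<Rightarrow> 'a set" where
  "map_verts C Fs = \<Union> (set ` insert C Fs)"

definition H_adj :: "'a list \<Rightarrow> 'a list set \<Rightarrow> 'a \<Rightarrow> 'a \<Rightarrow> bool" where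
  "H_adj C Fs u v \<longleftrightarrow> (u, v) \<in> map_darts C Fs"

definition connected_on :: "'a set \<Rightarrow> ('a \<Rightarrow> 'a \<Rightarrow> bool) \<Rightarrow> bool" where
  "connected_on S adj \<longleftrightarrow>
     (\<forall>u\<in>S. \<forall>v\<in>S. (\<lambda>a b. a \<in> S \<and> b \<in> S \<and> adj a b)\<^sup>*\<^sup>* u v)"

definition two_connected :: "'a set \<Rightarrow> ('a \<Rightarrow> 'a \<Rightarrow> bool) \<Rightarrow> bool" where
  "two_connected S adj \<longleftrightarrow> finite S \<and> card S \<ge> 3 \<and> connected_on S adj \<and>
     (\<forall>x\<in>S. connected_on (S - {x}) adj)"

text \<open>Rotation at vertex v: from neighbour u to neighbour z, where the face
  containing dart (u,v) continues with dart (v,z).\<close>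
definition rotation_step :: "'a list \<Rightarrow> 'a list set \<Rightarrow> 'a \<Rightarrow> 'a \<Rightarrow> 'a \<Rightarrow> bool" where
  "rotation_step C Fs v u z \<longleftrightarrow>
     (\<exists>w\<in>insert C Fs. (u, v) \<in> darts w \<and> (v, z) \<in> darts w)"

text \<open>Combinatorial map of a connected simple plane graph whose faces are
  bounded by cycles: each dart lies on exactly one facial walk, the dart set
  is symmetric, the rotation at every vertex is a single cycle (so the
  surface is a closed surface), the graph is connected and Euler's formula
  V - E + F = 2 holds (so the surface is the sphere).\<close>
definition plane_map :: "'a list \<Rightarrow> 'a list set \<Rightarrow> bool" where
  "plane_map C Fs \<longleftrightarrow>
     finite Fs \<and> distinct C \<and> length C \<ge> 3 \<and>
     (\<forall>f\<in>Fs. distinct f \<and> length f \<ge> 3) \<and>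
     (\<forall>f\<in>Fs. darts f \<inter> darts C = {}) \<and>
     (\<forall>f\<in>Fs. \<forall>g\<in>Fs. f \<noteq> g \<longrightarrow> darts f \<inter> darts g = {}) \<and>
     (\<forall>u v. (u, v) \<in> map_darts C Fs \<longrightarrow> (v, u) \<in> map_darts C Fs) \<and>
     (\<forall>v\<in>map_verts C Fs. \<forall>u z. H_adj C Fs v u \<and> H_adj C Fs v z \<longrightarrow>
         (rotation_step C Fs v)\<^sup>*\<^sup>* u z) \<and>
     connected_on (map_verts C Fs) (H_adj C Fs) \<and>
     int (card (map_verts C Fs)) - int (card (map_darts C Fs) div 2)
       + int (card Fs + 1) = 2"

definition near_quadrangulation :: "'a list \<Rightarrow> 'a list set \<Rightarrow> bool" where
  "near_quadrangulation C Fs \<longleftrightarrow>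
     plane_map C Fs \<and> (\<forall>f\<in>Fs. length f = 4) \<and>
     two_connected (map_verts C Fs) (H_adj C Fs)"

definition hue_bipartition :: "'a list \<Rightarrow> 'a list set \<Rightarrow> ('a \<Rightarrow> int) \<Rightarrow> bool" where
  "hue_bipartition C Fs h \<longleftrightarrow>
     (\<forall>v\<in>map_verts C Fs. h v \<in> {0, 1}) \<and>
     (\<forall>u v. H_adj C Fs u v \<longrightarrow> h u \<noteq> h v)"

definition patch_verts :: "'a list \<Rightarrow> 'a list set \<Rightarrow> ('a + 'a list) set" where
  "patch_verts C Fs = Inl ` map_verts C Fs \<union> Inr ` Fs"

definition patch_adj :: "'a list \<Rightarrow> 'a list set \<Rightarrow> ('a + 'a list) \<Rightarrow> ('a + 'a list) \<Rightarrow> bool" where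
  "patch_adj C Fs x y =
     (case (x, y) of
        (Inl u, Inl v) \<Rightarrow> H_adj C Fs u v
      | (Inl u, Inr f) \<Rightarrow> f \<in> Fs \<and> u \<in> set f
      | (Inr f, Inl u) \<Rightarrow> f \<in> Fs \<and> u \<in> set f
      | (Inr f, Inr g) \<Rightarrow> False)"

definition patch_hue :: "('a \<Rightarrow> int) \<Rightarrow> ('a + 'a list) \<Rightarrow> int" where
  "patch_hue h x = (case x of Inl v \<Rightarrow> h v | Inr f \<Rightarrow> 2)"

text \<open>Colors in Z_2^2 are represented as pairs in {0,1} x {0,1}.\<close>
definition four_coloring :: "'b set \<Rightarrow> ('b \<Rightarrow> 'b \<Rightarrow> bool) \<Rightarrow> ('b \<Rightarrow> int \<times> int) \<Rightarrow> bool" where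
  "four_coloring S adj c \<longleftrightarrow>
     (\<forall>x\<in>S. c x \<in> {0, 1} \<times> {0, 1}) \<and> (\<forall>x\<in>S. \<forall>y\<in>S. adj x y \<longrightarrow> c x \<noteq> c y)"

definition cycle_adj :: "'a list \<Rightarrow> 'a \<Rightarrow> 'a \<Rightarrow> bool" where
  "cycle_adj C u v \<longleftrightarrow> (u, v) \<in> darts C \<or> (v, u) \<in> darts C"

definition T_adj :: "int \<times> int \<Rightarrow> int \<times> int \<Rightarrow> bool" where
  "T_adj p q \<longleftrightarrow>
     (fst q - fst p, snd q - snd p) \<in> {(1, 0), (-1, 0), (0, 1), (0, -1), (1, 1), (-1, -1)}"

definition T_hue :: "int \<times> int \<Rightarrow> int" where
  "T_hue p = (fst p + snd p) mod 3"

definition T_col :: "int \<times> int \<Rightarrow> int \<times> int" where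
  "T_col p = (fst p mod 2, snd p mod 2)"

definition hom_to_T :: "'b set \<Rightarrow> ('b \<Rightarrow> 'b \<Rightarrow> bool) \<Rightarrow> ('b \<Rightarrow> int) \<Rightarrow> ('b \<Rightarrow> int \<times> int)
    \<Rightarrow> ('b \<Rightarrow> int \<times> int) \<Rightarrow> bool" where
  "hom_to_T S adj hue col f \<longleftrightarrow>
     (\<forall>x\<in>S. \<forall>y\<in>S. adj x y \<longrightarrow> T_adj (f x) (f y)) \<and>
     (\<forall>x\<in>S. T_hue (f x) = hue x \<and> T_col (f x) = col x)"

definition viable :: "'b set \<Rightarrow> ('b \<Rightarrow> 'b \<Rightarrow> bool) \<Rightarrow> ('b \<Rightarrow> int) \<Rightarrow> ('b \<Rightarrow> int \<times> int) \<Rightarrow> bool" where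
  "viable S adj hue col \<longleftrightarrow> (\<exists>f. hom_to_T S adj hue col f)"

text \<open>A closed walk is a list read cyclically.  A one-step retraction removes
  u_{i+1}, u_{i+2} from a cyclically consecutive triple u_i u_{i+1} u_{i+2} with
  u_i = u_{i+2} (rotations express cyclicity); length-two walks retract to the
  empty walk.  nullhom Z holds iff repeated retractions reduce Z to [].\<close>
inductive nullhom :: "'c list \<Rightarrow> bool" where
  nh_nil: "nullhom []"
| nh_two: "nullhom [a, b]"
| nh_step: "nullhom (a # rest) \<Longrightarrow> nullhom (rotate k (a # b # a # rest))"

definition null_homotopic_on_cycle :: "'a list \<Rightarrow> ('a \<Rightarrow> int) \<Rightarrow> ('a \<Rightarrow> int \<times> int) \<Rightarrow> bool" where
  "null_homotopic_on_cycle C hue col \<longleftrightarrow>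
     (\<forall>f. hom_to_T (set C) (cycle_adj C) hue col f \<longrightarrow> nullhom (map f C))"

end

theory Submission
  imports Defs
begin

(* Label each vertex v of H by L v = (h v, \<psi> (Inl v)), the hue and colour it must receive in T.
  Two vertices of T joined by a path of length two and carrying the same hue and colour coincide,
  so a closed walk in T is null-homotopic as soon as its sequence of labels is: it suffices to show
  that the label sequence of C is null-homotopic.

  The face vertex of a quadrangle of H is adjacent to its four corners, which therefore see at
  most three colours: one diagonal is monochromatic, and as its ends also share their hue, L
  agrees on a diagonal of every inner face.

  The claim is proved for quadrangulated disks bounded by an arbitrary closed walk, by induction
  on the number of darts. A backtrack u v u of the outer walk is removed by deleting the leaf v.
  Otherwise Euler's formula guarantees an inner face, and connectivity one, v u a b, sharing an
  edge u v with the outer walk; merging it into the outer face replaces u v by u a b v, which by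
  the diagonal agreement only inserts a backtrack into the label sequence. *)

section \<open>Null-homotopy of closed walks\<close>

fun push_vertex :: "'c \<Rightarrow> 'c list \<Rightarrow> 'c list" where
  "push_vertex y (x # z # s) = (if y = z then z # s else y # x # z # s)"
| "push_vertex y s = y # s"

(* The reduction of a walk, kept reversed so that its last vertex is at the head. *)
definition reduce_rev :: "'c list \<Rightarrow> 'c list" where
  "reduce_rev xs = foldl (\<lambda>s y. push_vertex y s) [] xs"

fun backtrack_free :: "'c list \<Rightarrow> bool" where
  "backtrack_free (x # y # z # s) \<longleftrightarrow> x \<noteq> z \<and> backtrack_free (y # z # s)"
| "backtrack_free s \<longleftrightarrow> True"

lemma reduce_rev_Nil [simp]: "reduce_rev [] = []"
  by (simp add: reduce_rev_def)

lemma reduce_rev_snoc [simp]: "reduce_rev (xs @ [y]) = push_vertex y (reduce_rev xs)"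
  by (simp add: reduce_rev_def)

lemma reduce_rev_append: "reduce_rev (xs @ ys) = foldl (\<lambda>s y. push_vertex y s) (reduce_rev xs) ys"
  by (simp add: reduce_rev_def)

lemma push_vertex_neq_Nil: "push_vertex y s \<noteq> []"
  by (cases "(y, s)" rule: push_vertex.cases) auto

lemma hd_push_vertex: "hd (push_vertex y s) = y"
  by (cases "(y, s)" rule: push_vertex.cases) auto

lemma backtrack_free_Cons: "backtrack_free (x # s) \<Longrightarrow> backtrack_free s"
  by (cases "x # s" rule: backtrack_free.cases) auto

lemma backtrack_free_push_vertex: "backtrack_free s \<Longrightarrow> backtrack_free (push_vertex y s)"
  by (cases "(y, s)" rule: push_vertex.cases) (auto dest: backtrack_free_Cons)

lemma backtrack_free_reduce_rev: "backtrack_free (reduce_rev xs)"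
  by (induction xs rule: rev_induct) (simp_all add: backtrack_free_push_vertex)

lemma hd_reduce_rev: "xs \<noteq> [] \<Longrightarrow> reduce_rev xs \<noteq> [] \<and> hd (reduce_rev xs) = last xs"
  by (induction xs rule: rev_induct) (auto simp: push_vertex_neq_Nil hd_push_vertex)

lemma push_vertex_backtrack:
  assumes "backtrack_free (a # s)"
  shows "push_vertex a (push_vertex b (a # s)) = a # s"
  using assms by (cases "(b, a # s)" rule: push_vertex.cases) (auto elim: backtrack_free.elims)

lemma reduce_rev_cancel:
  assumes "P \<noteq> []" "last P = a"
  shows "reduce_rev (P @ [b, a] @ Q) = reduce_rev (P @ Q)"
proof -
  obtain s where s: "reduce_rev P = a # s"
    using hd_reduce_rev[OF assms(1)] assms(2) by (cases "reduce_rev P") auto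
  have "reduce_rev (P @ [b, a]) = reduce_rev P"
    using push_vertex_backtrack[of a s b] backtrack_free_reduce_rev[of P]
    by (simp add: s reduce_rev_append)
  then show ?thesis
    by (metis append.assoc reduce_rev_append)
qed

lemma reduce_rev_append_reduced: "reduce_rev (A @ M) = reduce_rev (A @ rev (reduce_rev M))"
proof (induction M rule: rev_induct)
  case Nil
  then show ?case by simp
next
  case (snoc y M)
  have "reduce_rev (A @ M @ [y]) = reduce_rev (A @ rev (reduce_rev M) @ [y])"
    using snoc by (metis append.assoc reduce_rev_snoc)
  also have "\<dots> = reduce_rev (A @ rev (push_vertex y (reduce_rev M)))"
  proof (cases "(y, reduce_rev M)" rule: push_vertex.cases)
    case (1 y' x z s)
    then show ?thesis
      using reduce_rev_cancel[of "A @ rev s @ [z]" z x "[]"] by (cases "y = z") auto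
  qed auto
  finally show ?case by simp
qed

lemma reduce_rev_rev: "backtrack_free s \<Longrightarrow> reduce_rev (rev s) = s"
proof (induction s)
  case (Cons x s)
  then have "reduce_rev (rev (x # s)) = push_vertex x s"
    by (simp add: backtrack_free_Cons)
  also have "\<dots> = x # s"
    using Cons.prems by (cases "(x, s)" rule: push_vertex.cases) auto
  finally show ?case .
qed simp

lemma backtrack_split: "\<not> backtrack_free s \<Longrightarrow> \<exists>p a b q. s = p @ a # b # a # q"
proof (induction s rule: backtrack_free.induct)
  case (1 x y z s)
  show ?case
  proof (cases "x = z")
    case True
    then show ?thesis by (metis append_Nil)
  next
    case False
    then obtain p a b q where "y # z # s = p @ a # b # a # q"
      using 1 by auto
    then have "x # y # z # s = (x # p) @ a # b # a # q"
      by simp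
    then show ?thesis by blast
  qed
qed auto

(* A normal form for nullhom, which by itself only inserts backtracks: this is what allows
  backtracks to be cancelled anywhere (nullhom_cancel_backtrack). *)
definition reduces_to_point :: "'c list \<Rightarrow> bool" where
  "reduces_to_point Z \<longleftrightarrow> Z = [] \<or> reduce_rev (Z @ [hd Z]) = [hd Z]"

lemma reduces_to_point_backtrack_iff:
  "reduces_to_point (a # b # a # rest) \<longleftrightarrow> reduces_to_point (a # rest)"
  using reduce_rev_cancel[of "[a]" a b "rest @ [a]"] by (simp add: reduces_to_point_def)

lemma reduces_to_point_rotate1: "reduces_to_point Z \<Longrightarrow> reduces_to_point (rotate1 Z)"
proof (cases Z)
  case (Cons z Y)
  assume Z: "reduces_to_point Z"
  show ?thesis
  proof (cases Y)
    case (Cons y Y')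
    have "reduce_rev ([y] @ Y' @ [z, y]) = reduce_rev ([y] @ [z, y] @ Y' @ [z, y])"
      by (rule reduce_rev_cancel[symmetric]) auto
    also have "\<dots> = push_vertex y (reduce_rev ([y] @ Z @ [z]))"
      using \<open>Z = z # Y\<close> Cons by (simp flip: reduce_rev_snoc)
    also have "\<dots> = push_vertex y (reduce_rev [y, z])"
      using Z \<open>Z = z # Y\<close> reduce_rev_append_reduced[of "[y]" "Z @ [z]"]
      by (simp add: reduces_to_point_def)
    also have "\<dots> = [y]"
      by (simp add: reduce_rev_def)
    finally show ?thesis
      using \<open>Z = z # Y\<close> Cons by (simp add: reduces_to_point_def)
  qed (use Z Cons in simp)
qed simp

lemma reduces_to_point_rotate: "reduces_to_point Z \<Longrightarrow> reduces_to_point (rotate k Z)"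
  by (induction k) (auto simp: reduces_to_point_rotate1)

lemma rotate_inverse: "\<exists>k'. rotate k' (rotate k xs) = xs"
proof (cases "xs = []")
  case False
  define n where "n = length xs"
  have "k mod n \<le> n"
    using False by (simp add: n_def order_less_imp_le)
  then have "(n - k mod n + k) mod n = 0"
    by (metis mod_add_right_eq mod_self le_add_diff_inverse2)
  then show ?thesis
    by (metis rotate_id rotate_rotate n_def)
qed simp

lemma rotate_to_backtrack:
  assumes "Z @ [hd Z] = p @ a # b # a # q" and "3 \<le> length Z"
  shows "\<exists>r. rotate (length p) Z = a # b # a # r"
proof (cases q rule: rev_cases)
  case Nil
  then have Z: "Z = p @ [a, b]"
    using assms(1) by simp
  then obtain p' where "p = a # p'"
    using assms by (cases p) auto
  then show ?thesis
    using Z by (metis append_Cons append_Nil rotate_append)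
next
  case (snoc q' c)
  then have "Z = p @ a # b # a # q'"
    using assms(1) by simp
  then show ?thesis
    by (simp add: rotate_append)
qed

lemma nullhom_rotate1: "nullhom Z \<Longrightarrow> nullhom (rotate1 Z)"
proof (induction rule: nullhom.cases)
  case (nh_step a rest k b)
  then show ?case
    using nullhom.nh_step[of a rest "Suc k" b] by simp
qed (simp_all add: nullhom.intros)

lemma nullhom_rotate: "nullhom Z \<Longrightarrow> nullhom (rotate k Z)"
  by (induction k) (simp_all add: nullhom_rotate1)

lemma nullhom_rotate_iff: "nullhom (rotate k Z) \<longleftrightarrow> nullhom Z"
  by (metis nullhom_rotate rotate_inverse)

lemma nullhom_reduces_to_point: "nullhom Z \<Longrightarrow> reduces_to_point Z"
proof (induction rule: nullhom.induct)
  case (nh_step a rest k b)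
  then show ?case
    by (simp add: reduces_to_point_backtrack_iff reduces_to_point_rotate)
qed (simp_all add: reduces_to_point_def reduce_rev_def)

lemma reduces_to_point_nullhom: "reduces_to_point Z \<Longrightarrow> nullhom Z"
proof (induction "length Z" arbitrary: Z rule: less_induct)
  case less
  show ?case
  proof (cases "length Z \<le> 2")
    case True
    then consider "Z = []" | z where "Z = [z]" | a b where "Z = [a, b]"
      by (cases Z rule: remdups_adj.cases) auto
    then show ?thesis
      using less.prems by cases (simp_all add: nullhom.intros reduces_to_point_def reduce_rev_def)
  next
    case False
    define w where "w = Z @ [hd Z]"
    have "\<not> backtrack_free (rev w)"
    proof
      assume "backtrack_free (rev w)"
      then have "reduce_rev w = rev w"
        using reduce_rev_rev by fastforce
      then show False
        using less.prems False by (auto simp: reduces_to_point_def w_def)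
    qed
    then obtain p a b q where "w = rev q @ a # b # a # rev p"
      by (metis backtrack_split rev_rev_ident rev.simps append_assoc rev_append append_Cons append_Nil)
    then obtain r where r: "rotate (length (rev q)) Z = a # b # a # r"
      using rotate_to_backtrack[of Z "rev q" a b "rev p"] False by (auto simp: w_def)
    then have "reduces_to_point (a # r)"
      using less.prems reduces_to_point_rotate reduces_to_point_backtrack_iff by metis
    then have "nullhom (a # r)"
      using less.hyps r False by (metis length_Cons length_rotate lessI less_trans)
    then show ?thesis
      using nullhom.nh_step r by (metis rotate_inverse)
  qed
qed

lemma nullhom_cancel_backtrack: "nullhom (a # b # a # rest) \<Longrightarrow> nullhom (a # rest)"
  by (metis nullhom_reduces_to_point reduces_to_point_backtrack_iff reduces_to_point_nullhom)

definition dart_list :: "'a list \<Rightarrow> ('a \<times> 'a) list" where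
  "dart_list w = zip w (rotate1 w)"

definition corners :: "'a list \<Rightarrow> (('a \<times> 'a) \<times> ('a \<times> 'a)) set" where
  "corners w = darts (dart_list w)"

lemma darts_conv_dart_list: "darts w = set (dart_list w)"
proof -
  have "set (dart_list w) = {(w ! i, rotate1 w ! i) | i. i < length w}"
    by (simp add: dart_list_def set_zip)
  also have "\<dots> = darts w"
    unfolding darts_def by (auto simp: nth_rotate1)
  finally show ?thesis by simp
qed

lemma dart_list_Cons: "dart_list (x # r) = zip (x # r) (r @ [x])"
  by (simp add: dart_list_def)

lemma length_dart_list [simp]: "length (dart_list w) = length w"
  by (simp add: dart_list_def)

lemma nth_dart_list: "i < length w \<Longrightarrow> dart_list w ! i = (w ! i, w ! (Suc i mod length w))"
  by (simp add: dart_list_def nth_rotate1)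

lemma dart_list_rotate1: "dart_list (rotate1 w) = rotate1 (dart_list w)"
proof -
  have "zip (rotate1 a) (rotate1 b) = rotate1 (zip a b)" if "length a = length b" for a b :: "'a list"
    using that by (cases a; cases b) auto
  then show ?thesis
    by (simp add: dart_list_def)
qed

lemma dart_list_rotate: "dart_list (rotate k w) = rotate k (dart_list w)"
  by (induction k) (simp_all add: dart_list_rotate1)

lemma darts_rotate [simp]: "darts (rotate k w) = darts w"
  by (simp add: darts_conv_dart_list dart_list_rotate)

lemma corners_rotate [simp]: "corners (rotate k w) = corners w"
  by (simp add: corners_def dart_list_rotate)

lemma distinct_dart_list_rotate [simp]: "distinct (dart_list (rotate k w)) = distinct (dart_list w)"
  by (simp add: dart_list_rotate)

lemma distinct_dart_list: "distinct w \<Longrightarrow> distinct (dart_list w)"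
  by (simp add: dart_list_def distinct_zipI1)

lemma dart_in_set: "(x, y) \<in> darts w \<Longrightarrow> x \<in> set w \<and> y \<in> set w"
  unfolding darts_conv_dart_list dart_list_def by (metis set_rotate1 set_zip_leftD set_zip_rightD)

lemma dart_out: "x \<in> set w \<Longrightarrow> \<exists>y. (x, y) \<in> darts w"
  by (auto simp: darts_def in_set_conv_nth)

lemma finite_out_darts: "finite {z. (p, z) \<in> darts w}"
  by (rule finite_subset[of _ "snd ` darts w"]) (force, simp add: darts_conv_dart_list)

lemma distinct_dart_neq:
  assumes "distinct w" "2 \<le> length w" "(x, y) \<in> darts w"
  shows "x \<noteq> y"
proof -
  obtain i where i: "i < length w" "x = w ! i" "y = w ! (Suc i mod length w)"
    using assms(3) by (auto simp: darts_def)
  have "i \<noteq> Suc i mod length w"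
  proof (cases "Suc i < length w")
    case False
    then have "Suc i = length w"
      using i(1) by simp
    then show ?thesis
      using assms(2) by simp
  qed simp
  moreover have "Suc i mod length w < length w"
    by (rule mod_less_divisor) (use i(1) in auto)
  ultimately show ?thesis
    using assms(1) i by (simp add: nth_eq_iff_index_eq)
qed

definition consecutive_pairs :: "'a list \<Rightarrow> ('a \<times> 'a) set" where
  "consecutive_pairs xs = set (zip xs (tl xs))"

lemma consecutive_pairs_simps [simp]:
  "consecutive_pairs [] = {}" "consecutive_pairs [a] = {}"
  "consecutive_pairs (a # b # r) = insert (a, b) (consecutive_pairs (b # r))"
  by (simp_all add: consecutive_pairs_def)

lemma consecutive_pairs_snoc:
  "xs \<noteq> [] \<Longrightarrow> consecutive_pairs (xs @ [y]) = insert (last xs, y) (consecutive_pairs xs)"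
proof (induction xs)
  case (Cons x xs)
  then show ?case
    by (cases xs) auto
qed simp

lemma darts_Cons: "darts (d # D) = insert (last (d # D), d) (consecutive_pairs (d # D))"
proof -
  have "zip (d # D @ [d]) (D @ [d]) = zip (d # D) (D @ [d])"
    using zip_append1[of "d # D" "[d]" "D @ [d]"] by simp
  then have "darts (d # D) = consecutive_pairs ((d # D) @ [d])"
    by (simp add: darts_conv_dart_list dart_list_Cons consecutive_pairs_def)
  then show ?thesis
    using consecutive_pairs_snoc[of "d # D" d] by simp
qed

lemma corner_darts: "(d1, d2) \<in> corners w \<Longrightarrow> d1 \<in> darts w \<and> d2 \<in> darts w"
  unfolding corners_def darts_conv_dart_list[of w] by (rule dart_in_set)

lemma corner_middle: "(d1, d2) \<in> corners w \<Longrightarrow> snd d1 = fst d2"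
proof -
  assume "(d1, d2) \<in> corners w"
  then obtain i where i: "i < length w" "d1 = dart_list w ! i"
      "d2 = dart_list w ! (Suc i mod length w)"
    by (auto simp: corners_def darts_def)
  moreover have "Suc i mod length w < length w"
    by (rule mod_less_divisor) (use i(1) in auto)
  ultimately show ?thesis
    by (simp add: nth_dart_list)
qed

lemma corner_succ_unique:
  assumes "distinct (dart_list w)" "(d, d1) \<in> corners w" "(d, d2) \<in> corners w"
  shows "d1 = d2"
  using assms by (auto simp: corners_def darts_def nth_eq_iff_index_eq)

lemma corner_pred_unique:
  assumes "distinct (dart_list w)" "(d1, d) \<in> corners w" "(d2, d) \<in> corners w"
  shows "d1 = d2"
proof -
  have "distinct (rotate1 (dart_list w))"
    using assms(1) by simp
  moreover have "(d1, d) \<in> set (zip (dart_list w) (rotate1 (dart_list w)))"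
    "(d2, d) \<in> set (zip (dart_list w) (rotate1 (dart_list w)))"
    using assms(2,3) by (simp_all add: corners_def darts_conv_dart_list dart_list_def)
  ultimately show ?thesis
    by (auto simp: in_set_zip nth_eq_iff_index_eq)
qed

lemma distinct_corner:
  assumes "distinct w" "(x, v) \<in> darts w" "(v, z) \<in> darts w"
  shows "((x, v), (v, z)) \<in> corners w"
proof -
  define n where "n = length w"
  obtain i where i: "i < n" "x = w ! i" "v = w ! (Suc i mod n)"
    using assms(2) by (auto simp: darts_def n_def)
  obtain j where j: "j < n" "v = w ! j" "z = w ! (Suc j mod n)"
    using assms(3) by (auto simp: darts_def n_def)
  have "Suc i mod n < n"
    by (rule mod_less_divisor) (use i(1) in auto)
  then have "j = Suc i mod n"
    using i j assms(1) nth_eq_iff_index_eq[OF assms(1), of j "Suc i mod n"] by (simp add: n_def)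
  then have "dart_list w ! (Suc i mod n) = (v, z)"
    using j by (simp add: nth_dart_list n_def)
  moreover have "dart_list w ! i = (x, v)"
    using i by (simp add: nth_dart_list n_def)
  ultimately have "(x, v) = dart_list w ! i \<and> (v, z) = dart_list w ! (Suc i mod length w)"
    by (simp add: n_def)
  then show ?thesis
    unfolding corners_def darts_def using i(1) by (auto simp: n_def)
qed

lemma last_dart_list: "w \<noteq> [] \<Longrightarrow> last (dart_list w) = (last w, hd w)"
  by (cases w rule: rev_cases) (simp_all add: dart_list_def rotate1_hd_tl)

lemma corner_after:
  assumes "d \<in> darts w"
  shows "\<exists>d'. (d, d') \<in> corners w"
proof -
  obtain i where "i < length w" "d = dart_list w ! i"
    using assms by (auto simp: darts_conv_dart_list in_set_conv_nth)
  then have "(d, dart_list w ! (Suc i mod length w)) \<in> corners w"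
    unfolding corners_def darts_def by auto
  then show ?thesis ..
qed

lemma rotate_nth_prefix:
  assumes "i < length w" "m \<le> length w"
  shows "\<exists>r. rotate i w = map (\<lambda>j. w ! ((i + j) mod length w)) [0..<m] @ r"
proof -
  have "take m (rotate i w) = map (\<lambda>j. w ! ((i + j) mod length w)) [0..<m]"
    using assms by (auto intro!: nth_equalityI simp: nth_rotate)
  then show ?thesis
    by (metis append_take_drop_id)
qed

lemma rotate_to_dart:
  assumes "(x, y) \<in> darts w" "2 \<le> length w"
  shows "\<exists>k r. rotate k w = x # y # r"
proof -
  obtain i where i: "i < length w" "x = w ! i" "y = w ! (Suc i mod length w)"
    using assms(1) by (auto simp: darts_def)
  then show ?thesis
    using rotate_nth_prefix[OF i(1) assms(2)] by (auto simp: numeral_2_eq_2 mod_Suc_eq)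
qed

lemma rotate_quadrangle_to_dart:
  assumes "(y, x) \<in> darts f" "length f = 4"
  shows "\<exists>j a b. rotate j f = [y, x, a, b]"
proof -
  obtain j r where "rotate j f = y # x # r"
    using rotate_to_dart[OF assms(1)] assms(2) by auto
  moreover have "length (rotate j f) = 4"
    using assms(2) by simp
  ultimately show ?thesis
    by (auto simp: numeral_eq_Suc length_Suc_conv)
qed

lemma rotate_to_backtrack_corner:
  assumes "((x, p), (p, x)) \<in> corners w" "3 \<le> length w"
  shows "\<exists>k r. rotate k w = x # p # x # r"
proof -
  obtain i where i: "i < length w" "dart_list w ! i = (x, p)"
      "dart_list w ! (Suc i mod length w) = (p, x)"
    using assms(1) by (auto simp: corners_def darts_def)
  moreover have "Suc i mod length w < length w"
    by (rule mod_less_divisor) (use i(1) in auto)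
  ultimately have "w ! i = x" "w ! (Suc i mod length w) = p" "w ! (Suc (Suc i) mod length w) = x"
    by (simp_all add: nth_dart_list mod_Suc_eq)
  then show ?thesis
    using rotate_nth_prefix[OF i(1) assms(2)] i(1) by (auto simp: numeral_3_eq_3 mod_Suc_eq)
qed

section \<open>Lifting null-homotopy from hues and colors to the grid\<close>

definition T_label :: "int \<times> int \<Rightarrow> int \<times> (int \<times> int)" where
  "T_label p = (T_hue p, T_col p)"

definition T_walk :: "(int \<times> int) list \<Rightarrow> bool" where
  "T_walk Z \<longleftrightarrow> (\<forall>(p, q) \<in> darts Z. T_adj p q)"

lemma T_two_steps_label_inj:
  assumes "T_adj x y" "T_adj y z" "T_label x = T_label z"
  shows "x = z"
proof -
  (* z - x has both coordinates even, coordinate sum divisible by 3, and is a sum of two steps. *)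
  obtain x1 x2 y1 y2 z1 z2 where pts: "x = (x1, x2)" "y = (y1, y2)" "z = (z1, z2)"
    by (cases x, cases y, cases z)
  have "\<bar>z1 - x1\<bar> \<le> 2" "\<bar>z2 - x2\<bar> \<le> 2" "\<bar>(z1 - x1) - (z2 - x2)\<bar> \<le> 2"
    using assms(1,2) by (auto simp: T_adj_def pts)
  moreover have "(x1 + x2) mod 3 = (z1 + z2) mod 3" "x1 mod 2 = z1 mod 2" "x2 mod 2 = z2 mod 2"
    using assms(3) by (simp_all add: T_label_def T_hue_def T_col_def pts)
  then have "3 dvd (x1 + x2) - (z1 + z2)" "2 dvd x1 - z1" "2 dvd x2 - z2"
    by (simp_all only: mod_eq_dvd_iff)
  then obtain a b c where "x1 - z1 = 2 * a" "x2 - z2 = 2 * b" "(x1 + x2) - (z1 + z2) = 3 * c"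
    by (elim dvdE)
  ultimately have "\<bar>a\<bar> \<le> 1" "\<bar>b\<bar> \<le> 1" "\<bar>a - b\<bar> \<le> 1" "2 * a + 2 * b = 3 * c"
    by linarith+
  then have "a = 0 \<and> b = 0"
    by presburger
  then show ?thesis
    using \<open>x1 - z1 = 2 * a\<close> \<open>x2 - z2 = 2 * b\<close> pts by simp
qed

lemma T_walk_Cons3: "T_walk (x # y # z # r) \<Longrightarrow> T_adj x y \<and> T_adj y z"
  by (auto simp: T_walk_def darts_conv_dart_list dart_list_Cons)

lemma nullhom_lift_T: "nullhom Y \<Longrightarrow> Y = map T_label Z \<Longrightarrow> T_walk Z \<Longrightarrow> nullhom Z"
proof (induction Y arbitrary: Z rule: nullhom.induct)
  case nh_nil
  then show ?case by (simp add: nullhom.nh_nil)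
next
  case (nh_two a b)
  then show ?case
    by (auto simp: map_eq_Cons_conv nullhom.nh_two)
next
  case (nh_step a rest k b)
  obtain k' where "rotate k' (rotate k (a # b # a # rest)) = a # b # a # rest"
    using rotate_inverse by blast
  then have "map T_label (rotate k' Z) = a # b # a # rest"
    using nh_step.prems(1) by (simp add: rotate_map)
  then obtain x y z r where Z': "rotate k' Z = x # y # z # r" and
    "T_label x = a" "T_label y = b" "T_label z = a" and r: "map T_label r = rest"
    by (auto simp: map_eq_Cons_conv)
  moreover have walk: "T_walk (x # y # z # r)"
    using nh_step.prems(2) Z' by (metis T_walk_def darts_rotate)
  ultimately have "x = z"
    using T_two_steps_label_inj T_walk_Cons3 by metis
  have "r \<noteq> []"
  proof
    assume "r = []"
    then have "T_adj z x"
      using walk by (simp add: T_walk_def darts_conv_dart_list dart_list_Cons)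
    then show False
      using \<open>x = z\<close> by (simp add: T_adj_def)
  qed
  then have "T_walk (x # r)"
    using walk \<open>x = z\<close> by (auto simp: T_walk_def darts_Cons)
  then have "nullhom (x # r)"
    using nh_step.IH r \<open>T_label x = a\<close> by simp
  then have "nullhom (rotate k' Z)"
    using nullhom.nh_step[of x r 0 y] Z' \<open>x = z\<close> by simp
  then show ?case
    by (simp add: nullhom_rotate_iff)
qed

lemma darts_map: "darts (map g w) = (\<lambda>(x, y). (g x, g y)) ` darts w"
  by (simp add: darts_conv_dart_list dart_list_def rotate1_map zip_map_map)

lemma hom_to_T_cycle:
  assumes "hom_to_T (set C) (cycle_adj C) hue col g"
  shows "T_walk (map g C)" and "map T_label (map g C) = map (\<lambda>v. (hue v, col v)) C"
proof -
  show "T_walk (map g C)"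
    using assms unfolding T_walk_def hom_to_T_def cycle_adj_def darts_map by (auto dest: dart_in_set)
  show "map T_label (map g C) = map (\<lambda>v. (hue v, col v)) C"
    using assms by (simp add: hom_to_T_def T_label_def)
qed

lemma rtranclp_bypass:
  assumes into: "\<And>p. r p w \<Longrightarrow> p = p0" and out: "\<And>q. r w q \<Longrightarrow> q = q0"
    and bridge: "r'\<^sup>*\<^sup>* p0 q0" and keep: "\<And>p q. r p q \<Longrightarrow> p \<noteq> w \<Longrightarrow> q \<noteq> w \<Longrightarrow> r' p q"
    and path: "r\<^sup>*\<^sup>* x y" and "x \<noteq> w" "y \<noteq> w"
  shows "r'\<^sup>*\<^sup>* x y"
proof -
  have "(y \<noteq> w \<longrightarrow> r'\<^sup>*\<^sup>* x y) \<and> (y = w \<longrightarrow> r'\<^sup>*\<^sup>* x p0)"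
    using path
  proof (induction rule: rtranclp_induct)
    case base
    then show ?case
      using \<open>x \<noteq> w\<close> by simp
  next
    case (step y z)
    consider "z = w" | "y = w" "z \<noteq> w" | "y \<noteq> w" "z \<noteq> w"
      by blast
    then show ?case
    proof cases
      case 1
      then show ?thesis
        using step into by (cases "y = w") auto
    next
      case 2
      then show ?thesis
        using step out bridge by (auto intro: rtranclp_trans)
    next
      case 3
      then show ?thesis
        using step keep by (auto intro: rtranclp.rtrancl_into_rtrancl)
    qed
  qed
  then show ?thesis
    using \<open>y \<noteq> w\<close> by simp
qed

lemma rtranclp_replace_steps:
  assumes "\<And>p q. r p q \<Longrightarrow> r'\<^sup>*\<^sup>* p q" "r\<^sup>*\<^sup>* x y"
  shows "r'\<^sup>*\<^sup>* x y"
  using assms(2) by induction (auto intro: rtranclp_trans assms(1))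

section \<open>Quadrangulated disks bounded by a closed walk\<close>

(* Like plane_map with quadrangular inner faces, except that the outer boundary W is only a closed
  walk without repeated darts. Since W may pass a vertex several times, the rotation around a
  vertex is described by corners, i.e. pairs of consecutive darts of a facial walk. *)
definition corner_step :: "'v list \<Rightarrow> 'v list set \<Rightarrow> 'v \<Rightarrow> 'v \<Rightarrow> 'v \<Rightarrow> bool" where
  "corner_step W F y x z \<longleftrightarrow> (\<exists>w\<in>insert W F. ((x, y), (y, z)) \<in> corners w)"

locale quad_map =
  fixes W :: "'v list" and F :: "'v list set"
  assumes finite_faces: "finite F"
    and length_outer: "2 \<le> length W"
    and distinct_outer_darts: "distinct (dart_list W)"
    and outer_loop_free: "(x, y) \<in> darts W \<Longrightarrow> x \<noteq> y"
    and quadrangle_faces: "f \<in> F \<Longrightarrow> distinct f \<and> length f = 4"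
    and face_outer_disjoint: "f \<in> F \<Longrightarrow> darts f \<inter> darts W = {}"
    and faces_disjoint: "f \<in> F \<Longrightarrow> g \<in> F \<Longrightarrow> f \<noteq> g \<Longrightarrow> darts f \<inter> darts g = {}"
    and darts_sym: "(x, y) \<in> map_darts W F \<Longrightarrow> (y, x) \<in> map_darts W F"
    and rotation: "H_adj W F y x \<Longrightarrow> H_adj W F y z \<Longrightarrow> (corner_step W F y)\<^sup>*\<^sup>* x z"
    and connected: "connected_on (map_verts W F) (H_adj W F)"
    and euler: "int (card (map_verts W F)) - int (card (map_darts W F) div 2) + int (card F + 1) = 2"

lemma map_darts_conv: "map_darts W F = darts W \<union> (\<Union>f\<in>F. darts f)"
  by (simp add: map_darts_def)

lemma map_verts_conv: "map_verts W F = set W \<union> (\<Union>f\<in>F. set f)"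
  by (simp add: map_verts_def)

lemma H_adj_map_verts: "H_adj W F x y \<Longrightarrow> x \<in> map_verts W F \<and> y \<in> map_verts W F"
  by (auto simp: H_adj_def map_darts_def map_verts_def dest: dart_in_set)

lemma finite_map_darts: "finite F \<Longrightarrow> finite (map_darts W F)"
  by (simp add: map_darts_conv darts_conv_dart_list)

lemma finite_map_verts: "finite F \<Longrightarrow> finite (map_verts W F)"
  by (simp add: map_verts_conv)

lemma map_darts_rotate [simp]: "map_darts (rotate k W) F = map_darts W F"
  by (simp add: map_darts_conv)

lemma map_verts_rotate [simp]: "map_verts (rotate k W) F = map_verts W F"
  by (simp add: map_verts_conv)

lemma H_adj_rotate [simp]: "H_adj (rotate k W) F = H_adj W F"
  by (simp add: H_adj_def [abs_def])

lemma corner_step_rotate [simp]: "corner_step (rotate k W) F = corner_step W F"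
  by (simp add: corner_step_def [abs_def])

lemma quad_map_rotate: "quad_map W F \<Longrightarrow> quad_map (rotate k W) F"
  unfolding quad_map_def by simp

lemma rotation_step_le_corner_step:
  assumes "\<And>w. w \<in> insert C Fs \<Longrightarrow> distinct w"
  shows "rotation_step C Fs y \<le> corner_step C Fs y"
proof (intro predicate2I)
  fix x z
  assume "rotation_step C Fs y x z"
  then obtain w where w: "w \<in> insert C Fs" "(x, y) \<in> darts w" "(y, z) \<in> darts w"
    by (auto simp: rotation_step_def)
  then have "((x, y), (y, z)) \<in> corners w"
    by (intro distinct_corner assms)
  then show "corner_step C Fs y x z"
    unfolding corner_step_def using w(1) by blast
qed

lemma near_quadrangulation_quad_map:
  assumes "near_quadrangulation C Fs"
  shows "quad_map C Fs"
proof -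
  have pm: "plane_map C Fs" and quad: "\<forall>f\<in>Fs. length f = 4"
    using assms by (simp_all add: near_quadrangulation_def)
  have distinct: "w \<in> insert C Fs \<Longrightarrow> distinct w" for w
    using pm unfolding plane_map_def by blast
  have length_C: "3 \<le> length C"
    using pm unfolding plane_map_def by blast
  show ?thesis
  proof
    show "distinct (dart_list C)"
      using distinct by (simp add: distinct_dart_list)
    show "x \<noteq> y" if "(x, y) \<in> darts C" for x y
      using distinct_dart_neq[OF _ _ that] distinct length_C by simp
    show "distinct f \<and> length f = 4" if "f \<in> Fs" for f
      using that distinct quad by simp
    show "2 \<le> length C"
      using length_C by simp
    show "(corner_step C Fs y)\<^sup>*\<^sup>* x z" if "H_adj C Fs y x" "H_adj C Fs y z" for x y z
    proof -
      have "(rotation_step C Fs y)\<^sup>*\<^sup>* x z"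
        using pm that H_adj_map_verts[OF that(1)] unfolding plane_map_def by blast
      then show ?thesis
        using rtranclp_mono[OF rotation_step_le_corner_step[OF distinct]] by blast
    qed
  qed (use pm in \<open>unfold plane_map_def, blast\<close>)+
qed

context quad_map
begin

lemma out_degree_ge_2:
  assumes "F = {}" "\<nexists>x p. ((x, p), (p, x)) \<in> corners W" "p \<in> set W"
  shows "2 \<le> card {z. (p, z) \<in> darts W}"
proof -
  obtain x where "(p, x) \<in> darts W"
    using dart_out[OF assms(3)] by blast
  then have "(x, p) \<in> darts W"
    using darts_sym[of p x] assms(1) by (simp add: map_darts_conv)
  then obtain d where d: "((x, p), d) \<in> corners W"
    using corner_after by blast
  moreover have "fst d = p"
    using corner_middle[OF d] by simp
  ultimately obtain z where z: "((x, p), (p, z)) \<in> corners W"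
    by (cases d) auto
  then have "{x, z} \<subseteq> {z. (p, z) \<in> darts W}" "x \<noteq> z"
    using assms(2) corner_darts[OF z] \<open>(p, x) \<in> darts W\<close> by auto
  then show ?thesis
    using card_mono[OF finite_out_darts, of "{x, z}"] by (simp add: numeral_2_eq_2)
qed

lemma backtrack_corner_if_no_faces:
  assumes "F = {}"
  shows "\<exists>x p. ((x, p), (p, x)) \<in> corners W"
proof (rule ccontr)
  assume no_backtrack: "\<nexists>x p. ((x, p), (p, x)) \<in> corners W"
  define N where "N p = {z. (p, z) \<in> darts W}" for p
  have "(\<Sum>p\<in>set W. 2) \<le> (\<Sum>p\<in>set W. card (N p))"
    using out_degree_ge_2[OF assms no_backtrack] by (intro sum_mono) (simp add: N_def)
  also have "\<dots> = card (SIGMA p:set W. N p)"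
    by (rule card_SigmaI[symmetric]) (simp_all add: N_def finite_out_darts)
  also have "(SIGMA p:set W. N p) = darts W"
    unfolding N_def using dart_in_set by fast
  finally have "2 * card (set W) \<le> card (darts W)"
    by simp
  moreover have "int (card (set W)) - int (card (darts W) div 2) + 1 = 2"
    using euler assms by (simp add: map_verts_conv map_darts_conv)
  then have "card (darts W) div 2 + 1 = card (set W)"
    by linarith
  moreover have "card (darts W) < 2 * (card (darts W) div 2) + 2"
    by linarith
  ultimately show False
    by linarith
qed

lemma outer_dart_at_vertex:
  assumes reversal_closed: "\<And>x y. (x, y) \<in> darts W \<Longrightarrow> (y, x) \<in> darts W"
    and "p \<in> set W" "(p, z) \<in> map_darts W F"
  shows "(p, z) \<in> darts W"
proof -
  obtain z0 where z0: "(p, z0) \<in> darts W"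
    using dart_out[OF assms(2)] by blast
  then have "(corner_step W F p)\<^sup>*\<^sup>* z0 z"
    using rotation assms(3) by (simp add: H_adj_def map_darts_conv)
  then show ?thesis
  proof (induction rule: rtranclp_induct)
    case (step q q')
    then obtain w where w: "w \<in> insert W F" "((q, p), (p, q')) \<in> corners w"
      by (auto simp: corner_step_def)
    have "(q, p) \<in> darts W \<inter> darts w"
      using reversal_closed step.IH corner_darts[OF w(2)] by blast
    then have "w = W"
      using w(1) face_outer_disjoint by blast
    then show ?case
      using corner_darts[OF w(2)] by simp
  qed (rule z0)
qed

lemma map_verts_subset_outer:
  assumes reversal_closed: "\<And>x y. (x, y) \<in> darts W \<Longrightarrow> (y, x) \<in> darts W"
  shows "map_verts W F \<subseteq> set W"
proof
  fix q
  assume q: "q \<in> map_verts W F"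
  have "hd W \<in> map_verts W F"
    using length_outer by (cases W) (auto simp: map_verts_conv)
  then have "(\<lambda>a b. a \<in> map_verts W F \<and> b \<in> map_verts W F \<and> H_adj W F a b)\<^sup>*\<^sup>* (hd W) q"
    using connected q by (simp add: connected_on_def)
  then show "q \<in> set W"
  proof (induction rule: rtranclp_induct)
    case base
    then show ?case
      using length_outer by (cases W) auto
  next
    case (step q q')
    then have "(q, q') \<in> darts W"
      using outer_dart_at_vertex[OF reversal_closed] by (simp add: H_adj_def)
    then show ?case
      using dart_in_set[of q q' W] by simp
  qed
qed

lemma outer_dart_not_reversed:
  assumes "F \<noteq> {}"
  shows "\<exists>x y. (x, y) \<in> darts W \<and> (y, x) \<notin> darts W"
proof (rule ccontr)
  assume "\<not> ?thesis"
  then have reversal_closed: "\<And>x y. (x, y) \<in> darts W \<Longrightarrow> (y, x) \<in> darts W"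
    by blast
  obtain f where "f \<in> F"
    using assms by blast
  moreover have "f \<noteq> []"
    using quadrangle_faces[OF \<open>f \<in> F\<close>] by auto
  ultimately obtain x y where xy: "(x, y) \<in> darts f"
    using dart_out[of "hd f" f] by auto
  moreover have "x \<in> set f"
    using dart_in_set[OF xy] by simp
  ultimately have "(x, y) \<in> map_darts W F" "x \<in> map_verts W F"
    using \<open>f \<in> F\<close> by (auto simp: map_darts_conv map_verts_conv)
  then have "(x, y) \<in> darts W"
    using outer_dart_at_vertex[OF reversal_closed] map_verts_subset_outer[OF reversal_closed] by blast
  then show False
    using xy \<open>f \<in> F\<close> face_outer_disjoint by blast
qed

end

section \<open>Removing a spur of the outer walk\<close>

(* The outer walk goes along the edge u v and straight back, so v is a leaf; deleting it leaves the
  outer walk u # R. *)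
locale quad_map_spur = quad_map "u # v # u # R" F for u v :: 'v and R F
begin

lemma dart_list_spur: "dart_list (u # v # u # R) = (u, v) # (v, u) # dart_list (u # R)"
  by (simp add: dart_list_Cons)

lemma darts_spur: "darts (u # v # u # R) = insert (u, v) (insert (v, u) (darts (u # R)))"
  by (simp add: darts_conv_dart_list dart_list_spur)

lemma spur_neq: "u \<noteq> v"
  using outer_loop_free darts_spur by blast

lemma rest_not_Nil: "R \<noteq> []"
  using outer_loop_free[of u u] by (auto simp: darts_conv_dart_list dart_list_Cons)

lemma distinct_rest_darts: "distinct (dart_list (u # R))"
  and spur_darts_notin_rest: "(u, v) \<notin> darts (u # R)" "(v, u) \<notin> darts (u # R)"
  using distinct_outer_darts by (simp_all add: dart_list_spur darts_conv_dart_list)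

lemma outer_dart_only_on_outer:
  "d \<in> darts (u # v # u # R) \<Longrightarrow> w \<in> insert (u # v # u # R) F \<Longrightarrow> d \<in> darts w \<Longrightarrow> w = u # v # u # R"
  using face_outer_disjoint by blast

lemma map_darts_spur:
  "map_darts (u # v # u # R) F = insert (u, v) (insert (v, u) (map_darts (u # R) F))"
  and spur_map_darts_notin: "(u, v) \<notin> map_darts (u # R) F" "(v, u) \<notin> map_darts (u # R) F"
  using face_outer_disjoint spur_darts_notin_rest by (auto simp: map_darts_conv darts_spur)

lemma dart_list_rest: "\<exists>T. dart_list (u # R) = (u, hd R) # T \<and> last ((u, hd R) # T) = (last R, u)"
  using rest_not_Nil last_dart_list[of "u # R"] by (cases R) (auto simp: dart_list_Cons)

lemma corners_spur:
  "corners (u # v # u # R) = {((last R, u), (u, v)), ((u, v), (v, u)), ((v, u), (u, hd R))}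
     \<union> consecutive_pairs (dart_list (u # R))"
  using dart_list_rest by (auto simp: corners_def dart_list_spur darts_Cons)

lemma corners_rest:
  "corners (u # R) = insert ((last R, u), (u, hd R)) (consecutive_pairs (dart_list (u # R)))"
  using dart_list_rest by (auto simp: corners_def darts_Cons)

lemma corner_step_spur_dart:
  assumes "corner_step (u # v # u # R) F y p q" "{(p, y), (y, q)} \<inter> {(u, v), (v, u)} \<noteq> {}"
  shows "((p, y), (y, q)) \<in> corners (u # v # u # R)"
proof -
  obtain w where w: "w \<in> insert (u # v # u # R) F" "((p, y), (y, q)) \<in> corners w"
    using assms(1) by (auto simp: corner_step_def)
  obtain d where "d \<in> {(u, v), (v, u)}" "d \<in> darts w"
    using assms(2) corner_darts[OF w(2)] by blast
  then have "w = u # v # u # R"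
    using outer_dart_only_on_outer[OF _ w(1)] by (auto simp: darts_spur)
  then show ?thesis
    using w(2) by simp
qed

lemma unique_neighbour: "(v, z) \<in> map_darts (u # v # u # R) F \<Longrightarrow> z = u"
proof -
  assume "(v, z) \<in> map_darts (u # v # u # R) F"
  then have "H_adj (u # v # u # R) F v u" "H_adj (u # v # u # R) F v z"
    by (simp_all add: H_adj_def map_darts_spur)
  then have "(corner_step (u # v # u # R) F v)\<^sup>*\<^sup>* u z"
    by (rule rotation)
  then show "z = u"
  proof (induction rule: rtranclp_induct)
    case (step y q)
    then have "corner_step (u # v # u # R) F v u q"
      by simp
    then have "((u, v), (v, q)) \<in> corners (u # v # u # R)"
      by (rule corner_step_spur_dart) simp
    moreover have "((u, v), (v, u)) \<in> corners (u # v # u # R)"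
      unfolding corners_spur by blast
    ultimately show "q = u"
      using corner_succ_unique[OF distinct_outer_darts] by blast
  qed simp
qed

lemma spur_vertex_notin: "v \<notin> map_verts (u # R) F"
proof -
  have "v \<notin> set w" if w: "w \<in> insert (u # R) F" for w
  proof
    assume "v \<in> set w"
    from dart_out[OF this] obtain y where "(v, y) \<in> darts w" ..
    with w have vy: "(v, y) \<in> map_darts (u # R) F"
      by (auto simp: map_darts_conv)
    then have "(v, y) \<in> map_darts (u # v # u # R) F"
      by (simp add: map_darts_spur)
    then have "y = u"
      by (rule unique_neighbour)
    with vy show False
      using spur_map_darts_notin(2) by simp
  qed
  then show ?thesis
    unfolding map_verts_conv by blast
qed

lemma map_verts_spur: "map_verts (u # v # u # R) F = insert v (map_verts (u # R) F)"
  by (auto simp: map_verts_conv)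

lemma corner_step_kept:
  assumes "corner_step (u # v # u # R) F y p q" "p \<noteq> v" "y \<noteq> v" "q \<noteq> v"
  shows "corner_step (u # R) F y p q"
proof -
  obtain w where w: "w \<in> insert (u # v # u # R) F" "((p, y), (y, q)) \<in> corners w"
    using assms(1) by (auto simp: corner_step_def)
  show ?thesis
  proof (cases "w = u # v # u # R")
    case True
    then have "((p, y), (y, q)) \<in> corners (u # R)"
      using w(2) assms(2-4) by (auto simp: corners_spur corners_rest)
    then show ?thesis
      by (auto simp: corner_step_def)
  next
    case False
    then show ?thesis
      using w by (auto simp: corner_step_def)
  qed
qed

lemma rotation_rest_at_u:
  assumes "(corner_step (u # v # u # R) F u)\<^sup>*\<^sup>* x z" "x \<noteq> v" "z \<noteq> v"
  shows "(corner_step (u # R) F u)\<^sup>*\<^sup>* x z"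
proof (rule rtranclp_bypass[OF _ _ _ _ assms])
  fix p
  assume "corner_step (u # v # u # R) F u p v"
  then have "((p, u), (u, v)) \<in> corners (u # v # u # R)"
    by (rule corner_step_spur_dart) simp
  moreover have "((last R, u), (u, v)) \<in> corners (u # v # u # R)"
    unfolding corners_spur by blast
  ultimately show "p = last R"
    using corner_pred_unique[OF distinct_outer_darts] by blast
next
  fix q
  assume "corner_step (u # v # u # R) F u v q"
  then have "((v, u), (u, q)) \<in> corners (u # v # u # R)"
    by (rule corner_step_spur_dart) simp
  moreover have "((v, u), (u, hd R)) \<in> corners (u # v # u # R)"
    unfolding corners_spur by blast
  ultimately show "q = hd R"
    using corner_succ_unique[OF distinct_outer_darts] by blast
next
  have "((last R, u), (u, hd R)) \<in> corners (u # R)"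
    unfolding corners_rest by blast
  then show "(corner_step (u # R) F u)\<^sup>*\<^sup>* (last R) (hd R)"
    unfolding corner_step_def by blast
next
  fix p q
  assume "corner_step (u # v # u # R) F u p q" "p \<noteq> v" "q \<noteq> v"
  then show "corner_step (u # R) F u p q"
    using spur_neq by (intro corner_step_kept) auto
qed

lemma rotation_rest:
  assumes "H_adj (u # R) F y x" "H_adj (u # R) F y z"
  shows "(corner_step (u # R) F y)\<^sup>*\<^sup>* x z"
proof -
  have yxz: "(y, x) \<in> map_darts (u # R) F" "(y, z) \<in> map_darts (u # R) F"
    using assms by (simp_all add: H_adj_def)
  then have "H_adj (u # v # u # R) F y x" "H_adj (u # v # u # R) F y z"
    by (simp_all add: H_adj_def map_darts_spur)
  then have path: "(corner_step (u # v # u # R) F y)\<^sup>*\<^sup>* x z"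
    by (rule rotation)
  have "y \<noteq> v"
    using spur_vertex_notin H_adj_map_verts[OF assms(1)] by blast
  show ?thesis
  proof (cases "y = u")
    case True
    then show ?thesis
      using rotation_rest_at_u path yxz spur_map_darts_notin by blast
  next
    case False
    have "corner_step (u # R) F y p q" if "corner_step (u # v # u # R) F y p q" for p q
    proof (rule corner_step_kept[OF that _ \<open>y \<noteq> v\<close>])
      have "(p, y) \<in> map_darts (u # v # u # R) F" "(y, q) \<in> map_darts (u # v # u # R) F"
        using that corner_darts by (fastforce simp: corner_step_def map_darts_conv)+
      then show "p \<noteq> v" "q \<noteq> v"
        using unique_neighbour darts_sym[of p y] darts_sym[of y q] False by blast+
    qed
    then show ?thesis
      using path rtranclp_mono[of "corner_step (u # v # u # R) F y"] by blast
  qed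
qed

lemma connected_rest: "connected_on (map_verts (u # R) F) (H_adj (u # R) F)"
  unfolding connected_on_def
proof (intro ballI)
  fix x z
  assume xz: "x \<in> map_verts (u # R) F" "z \<in> map_verts (u # R) F"
  let ?r = "\<lambda>a b. a \<in> map_verts (u # v # u # R) F \<and> b \<in> map_verts (u # v # u # R) F
    \<and> H_adj (u # v # u # R) F a b"
  let ?r' = "\<lambda>a b. a \<in> map_verts (u # R) F \<and> b \<in> map_verts (u # R) F \<and> H_adj (u # R) F a b"
  have "?r\<^sup>*\<^sup>* x z"
    using connected xz by (simp add: connected_on_def map_verts_spur)
  moreover have "p = u" if "?r p v" for p
  proof (rule unique_neighbour)
    show "(v, p) \<in> map_darts (u # v # u # R) F"
      using that darts_sym[of p v] by (simp add: H_adj_def)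
  qed
  moreover have "q = u" if "?r v q" for q
  proof (rule unique_neighbour)
    show "(v, q) \<in> map_darts (u # v # u # R) F"
      using that by (simp add: H_adj_def)
  qed
  moreover have "?r' p q" if "?r p q" "p \<noteq> v" "q \<noteq> v" for p q
    using that by (auto simp: H_adj_def map_verts_spur map_darts_spur)
  moreover have "x \<noteq> v" "z \<noteq> v"
    using xz spur_vertex_notin by fastforce+
  ultimately show "?r'\<^sup>*\<^sup>* x z"
    using rtranclp_bypass[of ?r v u u ?r'] by blast
qed

lemma card_map_darts_spur:
  "card (map_darts (u # v # u # R) F) = card (map_darts (u # R) F) + 2"
proof -
  have fin: "finite (map_darts (u # R) F)"
    using finite_faces by (rule finite_map_darts)
  have "(u, v) \<notin> insert (v, u) (map_darts (u # R) F)"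
    using spur_neq spur_map_darts_notin(1) by blast
  then have "card (map_darts (u # v # u # R) F) = Suc (card (insert (v, u) (map_darts (u # R) F)))"
    unfolding map_darts_spur using fin by (intro card_insert_disjoint) auto
  also have "\<dots> = card (map_darts (u # R) F) + 2"
    using card_insert_disjoint[OF fin spur_map_darts_notin(2)] by simp
  finally show ?thesis .
qed

lemma euler_rest:
  "int (card (map_verts (u # R) F)) - int (card (map_darts (u # R) F) div 2) + int (card F + 1) = 2"
proof -
  have "card (map_verts (u # v # u # R) F) = card (map_verts (u # R) F) + 1"
    using spur_vertex_notin finite_faces by (simp add: map_verts_spur finite_map_verts)
  moreover have "card (map_darts (u # v # u # R) F) div 2 = card (map_darts (u # R) F) div 2 + 1"
    by (simp add: card_map_darts_spur)
  ultimately show ?thesis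
    using euler by linarith
qed

lemma quad_map_rest: "quad_map (u # R) F"
proof
  show "2 \<le> length (u # R)"
    using rest_not_Nil by (cases R) auto
  show "distinct (dart_list (u # R))"
    by (fact distinct_rest_darts)
  show "x \<noteq> y" if "(x, y) \<in> darts (u # R)" for x y
    by (rule outer_loop_free) (simp add: darts_spur that)
  show "darts f \<inter> darts (u # R) = {}" if "f \<in> F" for f
    using that face_outer_disjoint by (auto simp: darts_spur)
  show "(y, x) \<in> map_darts (u # R) F" if "(x, y) \<in> map_darts (u # R) F" for x y
    using that darts_sym[of x y] spur_map_darts_notin by (auto simp: map_darts_spur)
  show "(corner_step (u # R) F y)\<^sup>*\<^sup>* x z" if "H_adj (u # R) F y x" "H_adj (u # R) F y z" for x y z
    using that by (rule rotation_rest)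
qed (use finite_faces quadrangle_faces faces_disjoint connected_rest euler_rest in blast)+

lemma card_map_darts_rest: "card (map_darts (u # R) F) < card (map_darts (u # v # u # R) F)"
  by (simp add: card_map_darts_spur)

end

section \<open>Absorbing an inner face into the outer walk\<close>

(* The inner face f = v u a b shares the edge u v with the outer walk u # v # R; deleting the edge
  merges f into the outer face, whose walk becomes u # a # b # v # R. *)
locale quad_map_absorb = quad_map "u # v # R" F for u v :: 'v and R F +
  fixes f :: "'v list" and j :: nat and a b :: 'v
  assumes face_in: "f \<in> F" and face_rotate: "rotate j f = [v, u, a, b]"
begin

lemma face_distinct: "distinct [v, u, a, b]"
  using quadrangle_faces[OF face_in] face_rotate by (metis distinct_rotate)

lemma face_darts: "darts f = {(v, u), (u, a), (a, b), (b, v)}"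
proof -
  have "darts f = darts [v, u, a, b]"
    using darts_rotate[of j f] face_rotate by simp
  then show ?thesis
    by (auto simp: darts_conv_dart_list dart_list_Cons)
qed

lemma face_corners: "corners f = {((v, u), (u, a)), ((u, a), (a, b)), ((a, b), (b, v)), ((b, v), (v, u))}"
proof -
  have "corners f = corners [v, u, a, b]"
    using corners_rotate[of j f] face_rotate by simp
  then show ?thesis
    by (auto simp: corners_def darts_conv_dart_list dart_list_Cons)
qed

lemma face_set: "set f = {v, u, a, b}"
  using set_rotate[of j f] face_rotate by simp

lemma dart_list_outer: "dart_list (u # v # R) = (u, v) # zip (v # R) (R @ [u])"
  by (simp add: dart_list_Cons)

lemma dart_list_merged:
  "dart_list (u # a # b # v # R) = (u, a) # (a, b) # (b, v) # zip (v # R) (R @ [u])"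
  by (simp add: dart_list_Cons)

lemma darts_outer: "darts (u # v # R) = insert (u, v) (set (zip (v # R) (R @ [u])))"
  by (simp add: darts_conv_dart_list dart_list_outer)

lemma darts_merged:
  "darts (u # a # b # v # R) = {(u, a), (a, b), (b, v)} \<union> set (zip (v # R) (R @ [u]))"
  by (simp add: darts_conv_dart_list dart_list_merged)

lemma last_outer_dart: "last (zip (v # R) (R @ [u])) = (last (v # R), u)"
  by (simp add: last_zip)

lemma corners_outer:
  "corners (u # v # R) = {((last (v # R), u), (u, v)), ((u, v), (v, hd (R @ [u])))}
     \<union> consecutive_pairs (zip (v # R) (R @ [u]))"
proof -
  obtain T where T: "zip (v # R) (R @ [u]) = (v, hd (R @ [u])) # T"
    by (cases R) simp_all
  have "corners (u # v # R) = insert (last ((u, v) # zip (v # R) (R @ [u])), (u, v))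
      (consecutive_pairs ((u, v) # zip (v # R) (R @ [u])))"
    unfolding corners_def dart_list_outer by (rule darts_Cons)
  also have "\<dots> = insert ((last (v # R), u), (u, v))
      (consecutive_pairs ((u, v) # (v, hd (R @ [u])) # T))"
    using last_outer_dart by (simp only: last.simps T list.simps if_False)
  finally show ?thesis
    by (simp add: T)
qed

lemma corners_merged:
  "corners (u # a # b # v # R) = {((last (v # R), u), (u, a)), ((u, a), (a, b)), ((a, b), (b, v)),
     ((b, v), (v, hd (R @ [u])))} \<union> consecutive_pairs (zip (v # R) (R @ [u]))"
proof -
  obtain T where T: "zip (v # R) (R @ [u]) = (v, hd (R @ [u])) # T"
    by (cases R) simp_all
  have "corners (u # a # b # v # R) =
      insert (last ((u, a) # (a, b) # (b, v) # zip (v # R) (R @ [u])), (u, a))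
      (consecutive_pairs ((u, a) # (a, b) # (b, v) # zip (v # R) (R @ [u])))"
    unfolding corners_def dart_list_merged by (rule darts_Cons)
  also have "\<dots> = insert ((last (v # R), u), (u, a))
      (consecutive_pairs ((u, a) # (a, b) # (b, v) # (v, hd (R @ [u])) # T))"
    using last_outer_dart by (simp only: last.simps T list.simps if_False)
  finally show ?thesis
    by (auto simp: T)
qed

lemma outer_dart_only_on_outer:
  assumes "(u, v) \<in> darts w" "w \<in> insert (u # v # R) F"
  shows "w = u # v # R"
  using assms face_outer_disjoint darts_outer by blast

lemma reversed_dart_only_on_face:
  assumes "(v, u) \<in> darts w" "w \<in> insert (u # v # R) F"
  shows "w = f"
proof (rule ccontr)
  assume "w \<noteq> f"
  have "(v, u) \<in> darts f"
    by (simp add: face_darts)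
  then show False
    using assms \<open>w \<noteq> f\<close> face_in face_outer_disjoint faces_disjoint by blast
qed

lemma outer_tail_disjoint_face: "set (zip (v # R) (R @ [u])) \<inter> darts f = {}"
  using face_outer_disjoint[OF face_in] darts_outer by blast

lemma distinct_merged_darts: "distinct (dart_list (u # a # b # v # R))"
proof -
  have "distinct (zip (v # R) (R @ [u]))"
    using distinct_outer_darts by (simp add: dart_list_outer)
  moreover have "(u, a) \<notin> set (zip (v # R) (R @ [u]))" "(a, b) \<notin> set (zip (v # R) (R @ [u]))"
    "(b, v) \<notin> set (zip (v # R) (R @ [u]))"
    using outer_tail_disjoint_face by (auto simp: face_darts)
  ultimately show ?thesis
    using face_distinct by (simp add: dart_list_merged)
qed

lemma map_darts_absorb:
  "map_darts (u # v # R) F = insert (u, v) (insert (v, u) (map_darts (u # a # b # v # R) (F - {f})))"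
proof -
  have "F = insert f (F - {f})"
    using face_in by blast
  then have "map_darts (u # v # R) F = darts (u # v # R) \<union> darts f \<union> (\<Union>g\<in>F - {f}. darts g)"
    by (metis map_darts_conv Un_assoc UN_insert sup_commute)
  then show ?thesis
    by (auto simp: map_darts_conv darts_outer darts_merged face_darts)
qed

lemma absorbed_darts_notin:
  "(u, v) \<notin> map_darts (u # a # b # v # R) (F - {f})" "(v, u) \<notin> map_darts (u # a # b # v # R) (F - {f})"
proof -
  have "(u, v) \<in> darts (u # v # R)" "(v, u) \<in> darts f"
    by (simp_all add: darts_outer face_darts)
  then have "(u, v) \<notin> darts g" "(v, u) \<notin> darts g" if "g \<in> F - {f}" for g
    using that face_in face_outer_disjoint faces_disjoint by blast+
  moreover have "(u, v) \<notin> set (zip (v # R) (R @ [u]))"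
    using distinct_outer_darts by (simp add: dart_list_outer)
  moreover have "(v, u) \<notin> set (zip (v # R) (R @ [u]))"
    using outer_tail_disjoint_face by (auto simp: face_darts)
  ultimately show "(u, v) \<notin> map_darts (u # a # b # v # R) (F - {f})"
    "(v, u) \<notin> map_darts (u # a # b # v # R) (F - {f})"
    using face_distinct by (auto simp: map_darts_conv darts_merged)
qed

lemma map_verts_absorb: "map_verts (u # a # b # v # R) (F - {f}) = map_verts (u # v # R) F"
  using face_in face_set by (auto simp: map_verts_conv)

lemma corner_step_kept:
  assumes "corner_step (u # v # R) F y p q"
    and "(p, y) \<notin> {(u, v), (v, u)}" "(y, q) \<notin> {(u, v), (v, u)}"
  shows "corner_step (u # a # b # v # R) (F - {f}) y p q"
proof -
  obtain w where w: "w \<in> insert (u # v # R) F" "((p, y), (y, q)) \<in> corners w"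
    using assms(1) by (auto simp: corner_step_def)
  consider "w = u # v # R" | "w = f" | "w \<in> F - {f}"
    using w(1) by blast
  then have "((p, y), (y, q)) \<in> corners (u # a # b # v # R) \<or> w \<in> F - {f}"
  proof cases
    case 1
    have "((p, y), (y, q)) \<in> consecutive_pairs (zip (v # R) (R @ [u]))"
      using w(2)[unfolded 1 corners_outer] assms(2,3) by blast
    then show ?thesis
      unfolding corners_merged by blast
  next
    case 2
    have "((p, y), (y, q)) \<in> {((u, a), (a, b)), ((a, b), (b, v))}"
      using w(2)[unfolded 2 face_corners] assms(2,3) by blast
    then show ?thesis
      unfolding corners_merged by blast
  qed simp
  then show ?thesis
    using w(2) by (auto simp: corner_step_def)
qed

lemma corner_step_outer_dart:
  assumes "corner_step (u # v # R) F y p q" "(u, v) \<in> {(p, y), (y, q)}"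
  shows "((p, y), (y, q)) \<in> corners (u # v # R)"
proof -
  obtain w where w: "w \<in> insert (u # v # R) F" "((p, y), (y, q)) \<in> corners w"
    using assms(1) by (auto simp: corner_step_def)
  have "(u, v) \<in> darts w"
    using corner_darts[OF w(2)] assms(2) by blast
  then show ?thesis
    using outer_dart_only_on_outer[OF _ w(1)] w(2) by simp
qed

lemma corner_step_face_dart:
  assumes "corner_step (u # v # R) F y p q" "(v, u) \<in> {(p, y), (y, q)}"
  shows "((p, y), (y, q)) \<in> corners f"
proof -
  obtain w where w: "w \<in> insert (u # v # R) F" "((p, y), (y, q)) \<in> corners w"
    using assms(1) by (auto simp: corner_step_def)
  have "(v, u) \<in> darts w"
    using corner_darts[OF w(2)] assms(2) by blast
  then show ?thesis
    using reversed_dart_only_on_face[OF _ w(1)] w(2) by simp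
qed

lemma distinct_face_darts: "distinct (dart_list f)"
  using quadrangle_faces[OF face_in] by (simp add: distinct_dart_list)

lemma rotation_merged_at_u:
  assumes "(corner_step (u # v # R) F u)\<^sup>*\<^sup>* x z" "x \<noteq> v" "z \<noteq> v"
  shows "(corner_step (u # a # b # v # R) (F - {f}) u)\<^sup>*\<^sup>* x z"
proof (rule rtranclp_bypass[OF _ _ _ _ assms])
  fix p
  assume "corner_step (u # v # R) F u p v"
  then have "((p, u), (u, v)) \<in> corners (u # v # R)"
    by (rule corner_step_outer_dart) simp
  moreover have "((last (v # R), u), (u, v)) \<in> corners (u # v # R)"
    unfolding corners_outer by blast
  ultimately show "p = last (v # R)"
    using corner_pred_unique[OF distinct_outer_darts] by blast
next
  fix q
  assume "corner_step (u # v # R) F u v q"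
  then have "((v, u), (u, q)) \<in> corners f"
    by (rule corner_step_face_dart) simp
  moreover have "((v, u), (u, a)) \<in> corners f"
    by (simp add: face_corners)
  ultimately show "q = a"
    using corner_succ_unique[OF distinct_face_darts] by blast
next
  have "((last (v # R), u), (u, a)) \<in> corners (u # a # b # v # R)"
    unfolding corners_merged by blast
  then show "(corner_step (u # a # b # v # R) (F - {f}) u)\<^sup>*\<^sup>* (last (v # R)) a"
    unfolding corner_step_def by blast
next
  fix p q
  assume "corner_step (u # v # R) F u p q" "p \<noteq> v" "q \<noteq> v"
  then show "corner_step (u # a # b # v # R) (F - {f}) u p q"
    using face_distinct by (intro corner_step_kept) auto
qed

lemma rotation_merged_at_v:
  assumes "(corner_step (u # v # R) F v)\<^sup>*\<^sup>* x z" "x \<noteq> u" "z \<noteq> u"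
  shows "(corner_step (u # a # b # v # R) (F - {f}) v)\<^sup>*\<^sup>* x z"
proof (rule rtranclp_bypass[OF _ _ _ _ assms])
  fix p
  assume "corner_step (u # v # R) F v p u"
  then have "((p, v), (v, u)) \<in> corners f"
    by (rule corner_step_face_dart) simp
  moreover have "((b, v), (v, u)) \<in> corners f"
    by (simp add: face_corners)
  ultimately show "p = b"
    using corner_pred_unique[OF distinct_face_darts] by blast
next
  fix q
  assume "corner_step (u # v # R) F v u q"
  then have "((u, v), (v, q)) \<in> corners (u # v # R)"
    by (rule corner_step_outer_dart) simp
  moreover have "((u, v), (v, hd (R @ [u]))) \<in> corners (u # v # R)"
    unfolding corners_outer by blast
  ultimately show "q = hd (R @ [u])"
    using corner_succ_unique[OF distinct_outer_darts] by blast
next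
  have "((b, v), (v, hd (R @ [u]))) \<in> corners (u # a # b # v # R)"
    unfolding corners_merged by blast
  then show "(corner_step (u # a # b # v # R) (F - {f}) v)\<^sup>*\<^sup>* b (hd (R @ [u]))"
    unfolding corner_step_def by blast
next
  fix p q
  assume "corner_step (u # v # R) F v p q" "p \<noteq> u" "q \<noteq> u"
  then show "corner_step (u # a # b # v # R) (F - {f}) v p q"
    using face_distinct by (intro corner_step_kept) auto
qed

lemma rotation_merged:
  assumes "H_adj (u # a # b # v # R) (F - {f}) y x" "H_adj (u # a # b # v # R) (F - {f}) y z"
  shows "(corner_step (u # a # b # v # R) (F - {f}) y)\<^sup>*\<^sup>* x z"
proof -
  have yxz: "(y, x) \<in> map_darts (u # a # b # v # R) (F - {f})"
    "(y, z) \<in> map_darts (u # a # b # v # R) (F - {f})"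
    using assms by (simp_all add: H_adj_def)
  then have "H_adj (u # v # R) F y x" "H_adj (u # v # R) F y z"
    by (simp_all add: H_adj_def map_darts_absorb)
  then have path: "(corner_step (u # v # R) F y)\<^sup>*\<^sup>* x z"
    by (rule rotation)
  consider "y = u" | "y = v" | "y \<noteq> u" "y \<noteq> v"
    by blast
  then show ?thesis
  proof cases
    case 1
    then show ?thesis
      using rotation_merged_at_u path yxz absorbed_darts_notin by blast
  next
    case 2
    then show ?thesis
      using rotation_merged_at_v path yxz absorbed_darts_notin by blast
  next
    case 3
    then have "corner_step (u # v # R) F y \<le> corner_step (u # a # b # v # R) (F - {f}) y"
      using corner_step_kept by blast
    then show ?thesis
      using path rtranclp_mono by blast
  qed
qed

lemma connected_merged: "connected_on (map_verts (u # a # b # v # R) (F - {f})) (H_adj (u # a # b # v # R) (F - {f}))"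
  unfolding connected_on_def map_verts_absorb
proof (intro ballI)
  fix x z
  assume xz: "x \<in> map_verts (u # v # R) F" "z \<in> map_verts (u # v # R) F"
  let ?V = "map_verts (u # v # R) F"
  let ?r = "\<lambda>p q. p \<in> ?V \<and> q \<in> ?V \<and> H_adj (u # v # R) F p q"
  let ?r' = "\<lambda>p q. p \<in> ?V \<and> q \<in> ?V \<and> H_adj (u # a # b # v # R) (F - {f}) p q"
  have "?r'\<^sup>*\<^sup>* p q" if "?r p q" for p q
  proof (cases "(p, q) \<in> {(u, v), (v, u)}")
    case True
    have "u \<in> ?V" "v \<in> ?V" "a \<in> ?V" "b \<in> ?V"
      using face_in face_set by (auto simp: map_verts_conv)
    moreover have "(u, a) \<in> map_darts (u # a # b # v # R) (F - {f})"
      "(a, b) \<in> map_darts (u # a # b # v # R) (F - {f})"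
      "(b, v) \<in> map_darts (u # a # b # v # R) (F - {f})"
      by (simp_all add: map_darts_conv darts_merged)
    moreover have "(a, u) \<in> map_darts (u # a # b # v # R) (F - {f})"
      "(b, a) \<in> map_darts (u # a # b # v # R) (F - {f})"
      "(v, b) \<in> map_darts (u # a # b # v # R) (F - {f})"
      using calculation(5-7) darts_sym[of u a] darts_sym[of a b] darts_sym[of b v] face_distinct
      by (auto simp: map_darts_absorb)
    ultimately have step: "?r' u a" "?r' a b" "?r' b v" "?r' v b" "?r' b a" "?r' a u"
      by (auto simp: H_adj_def)
    have path3: "r x1 x2 \<Longrightarrow> r x2 x3 \<Longrightarrow> r x3 x4 \<Longrightarrow> r\<^sup>*\<^sup>* x1 x4" for r x1 x2 x3 x4
      by (blast intro: converse_rtranclp_into_rtranclp)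
    have "?r'\<^sup>*\<^sup>* u v" "?r'\<^sup>*\<^sup>* v u"
      using path3[of ?r', OF step(1-3)] path3[of ?r', OF step(4-6)] .
    then show ?thesis
      using True by auto
  next
    case False
    then show ?thesis
      using that by (auto simp: H_adj_def map_darts_absorb)
  qed
  moreover have "?r\<^sup>*\<^sup>* x z"
    using connected xz by (simp add: connected_on_def)
  ultimately show "?r'\<^sup>*\<^sup>* x z"
    by (rule rtranclp_replace_steps)
qed

lemma card_map_darts_absorb:
  "card (map_darts (u # v # R) F) = card (map_darts (u # a # b # v # R) (F - {f})) + 2"
proof -
  have fin: "finite (map_darts (u # a # b # v # R) (F - {f}))"
    using finite_faces by (simp add: finite_map_darts)
  have "(u, v) \<notin> insert (v, u) (map_darts (u # a # b # v # R) (F - {f}))"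
    using face_distinct absorbed_darts_notin(1) by auto
  then have "card (map_darts (u # v # R) F)
      = Suc (card (insert (v, u) (map_darts (u # a # b # v # R) (F - {f}))))"
    unfolding map_darts_absorb using fin by (intro card_insert_disjoint) auto
  also have "\<dots> = card (map_darts (u # a # b # v # R) (F - {f})) + 2"
    using card_insert_disjoint[OF fin absorbed_darts_notin(2)] by simp
  finally show ?thesis .
qed

lemma euler_merged:
  "int (card (map_verts (u # a # b # v # R) (F - {f})))
     - int (card (map_darts (u # a # b # v # R) (F - {f})) div 2) + int (card (F - {f}) + 1) = 2"
proof -
  have "card F = card (F - {f}) + 1"
    using face_in finite_faces by (metis card_Suc_Diff1 Suc_eq_plus1)
  moreover have "card (map_darts (u # v # R) F) div 2
      = card (map_darts (u # a # b # v # R) (F - {f})) div 2 + 1"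
    by (simp add: card_map_darts_absorb)
  ultimately show ?thesis
    using euler by (simp add: map_verts_absorb)
qed

lemma quad_map_merged: "quad_map (u # a # b # v # R) (F - {f})"
proof
  show "finite (F - {f})"
    using finite_faces by simp
  show "2 \<le> length (u # a # b # v # R)"
    by simp
  show "distinct (dart_list (u # a # b # v # R))"
    by (fact distinct_merged_darts)
  show "x \<noteq> y" if "(x, y) \<in> darts (u # a # b # v # R)" for x y
  proof (cases "(x, y) \<in> set (zip (v # R) (R @ [u]))")
    case True
    then show ?thesis
      by (intro outer_loop_free) (simp add: darts_outer)
  next
    case False
    then show ?thesis
      using that face_distinct by (auto simp: darts_merged)
  qed
  show "distinct g \<and> length g = 4" if "g \<in> F - {f}" for g
    using that quadrangle_faces by simp
  show "darts g \<inter> darts (u # a # b # v # R) = {}" if "g \<in> F - {f}" for g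
  proof -
    have "darts (u # a # b # v # R) \<subseteq> darts (u # v # R) \<union> darts f"
      by (auto simp: darts_merged darts_outer face_darts)
    then show ?thesis
      using that face_in face_outer_disjoint faces_disjoint by blast
  qed
  show "darts g \<inter> darts g' = {}" if "g \<in> F - {f}" "g' \<in> F - {f}" "g \<noteq> g'" for g g'
    using that faces_disjoint by simp
  show "(y, x) \<in> map_darts (u # a # b # v # R) (F - {f})"
    if "(x, y) \<in> map_darts (u # a # b # v # R) (F - {f})" for x y
    using that darts_sym[of x y] absorbed_darts_notin by (auto simp: map_darts_absorb)
  show "(corner_step (u # a # b # v # R) (F - {f}) y)\<^sup>*\<^sup>* x z"
    if "H_adj (u # a # b # v # R) (F - {f}) y x" "H_adj (u # a # b # v # R) (F - {f}) y z" for x y z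
    using that by (rule rotation_merged)
  show "connected_on (map_verts (u # a # b # v # R) (F - {f})) (H_adj (u # a # b # v # R) (F - {f}))"
    by (fact connected_merged)
  show "int (card (map_verts (u # a # b # v # R) (F - {f})))
     - int (card (map_darts (u # a # b # v # R) (F - {f})) div 2) + int (card (F - {f}) + 1) = 2"
    by (fact euler_merged)
qed

end

lemma nullhom_absorb_quadrangle:
  assumes "nullhom (x # a # b # y # R)" "y = a \<or> x = b"
  shows "nullhom (x # y # R)"
  using assms(2)
proof
  assume "y = a"
  have "nullhom (rotate1 (x # a # b # a # R))"
    using assms(1) \<open>y = a\<close> by (intro nullhom_rotate1) simp
  then have "nullhom (a # b # a # (R @ [x]))"
    by simp
  then have "nullhom ((a # R) @ [x])"
    by (simp add: nullhom_cancel_backtrack)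
  then have "nullhom (rotate (length (a # R)) ((a # R) @ [x]))"
    by (rule nullhom_rotate)
  moreover have "rotate (length (a # R)) ((a # R) @ [x]) = x # a # R"
    using rotate_append[of "a # R" "[x]"] by simp
  ultimately have "nullhom (x # a # R)"
    by (simp only:)
  then show ?thesis
    using \<open>y = a\<close> by (simp only:)
next
  assume "x = b"
  then have "nullhom (x # a # x # y # R)"
    using assms(1) by simp
  then show ?thesis
    by (rule nullhom_cancel_backtrack)
qed

definition diagonal_agrees :: "('v \<Rightarrow> 'c) \<Rightarrow> 'v list \<Rightarrow> bool" where
  "diagonal_agrees L f \<longleftrightarrow> L (f ! 0) = L (f ! 2) \<or> L (f ! 1) = L (f ! 3)"

lemma length_4_conv: "length f = 4 \<longleftrightarrow> (\<exists>f0 f1 f2 f3. f = [f0, f1, f2, f3])"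
  by (auto simp: numeral_eq_Suc length_Suc_conv)

lemma diagonal_agrees_rotate:
  assumes "length f = 4" "diagonal_agrees L f"
  shows "diagonal_agrees L (rotate j f)"
proof (induction j)
  case (Suc j)
  obtain f0 f1 f2 f3 where "rotate j f = [f0, f1, f2, f3]"
    using assms(1) length_4_conv[of "rotate j f"] by auto
  then show ?case
    using Suc by (auto simp: diagonal_agrees_def)
qed (use assms(2) in simp)

lemma (in quad_map) remove_spur:
  assumes "((x, p), (p, x)) \<in> corners W" "3 \<le> length W"
  obtains k R where "rotate k W = x # p # x # R" "quad_map (x # R) F"
    "card (map_darts (x # R) F) < card (map_darts W F)"
proof -
  obtain k R where W: "rotate k W = x # p # x # R"
    using rotate_to_backtrack_corner[OF assms] by blast
  then interpret quad_map_spur x p R F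
    using quad_map_rotate[OF quad_map_axioms, of k] by (simp add: quad_map_spur_def)
  have "card (map_darts (x # R) F) < card (map_darts W F)"
    using card_map_darts_rest map_darts_rotate[of k W F] W by simp
  then show ?thesis
    using that W quad_map_rest by blast
qed

lemma (in quad_map) absorb_face:
  assumes "\<nexists>x p. ((x, p), (p, x)) \<in> corners W" "3 \<le> length W"
  obtains k x y R f j a b where "rotate k W = x # y # R" "f \<in> F" "rotate j f = [y, x, a, b]"
    "quad_map (x # a # b # y # R) (F - {f})"
    "card (map_darts (x # a # b # y # R) (F - {f})) < card (map_darts W F)"
proof -
  have "F \<noteq> {}"
    using assms backtrack_corner_if_no_faces by blast
  then obtain x y where xy: "(x, y) \<in> darts W" "(y, x) \<notin> darts W"
    using outer_dart_not_reversed by blast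
  then have "(y, x) \<in> map_darts W F"
    using darts_sym[of x y] by (simp add: map_darts_conv)
  then obtain f where f: "f \<in> F" "(y, x) \<in> darts f"
    using xy(2) by (auto simp: map_darts_conv)
  obtain k R where W: "rotate k W = x # y # R"
    using rotate_to_dart[OF xy(1) length_outer] by blast
  obtain j a b where fj: "rotate j f = [y, x, a, b]"
    using rotate_quadrangle_to_dart[OF f(2)] quadrangle_faces[OF f(1)] by blast
  interpret quad_map_absorb x y R F f j a b
    using quad_map_rotate[OF quad_map_axioms, of k] W f(1) fj
    by (simp add: quad_map_absorb_def quad_map_absorb_axioms_def)
  have "card (map_darts (x # a # b # y # R) (F - {f})) < card (map_darts W F)"
    using card_map_darts_absorb map_darts_rotate[of k W F] W by simp
  then show ?thesis
    using that W f(1) fj quad_map_merged by blast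
qed

lemma quad_map_nullhom:
  assumes "quad_map W F" "\<forall>f\<in>F. diagonal_agrees L f"
  shows "nullhom (map L W)"
  using assms
proof (induction "card (map_darts W F)" arbitrary: W F rule: less_induct)
  case less
  interpret quad_map W F
    by (fact less.prems(1))
  consider (two) "length W = 2" | (spur) x p where "((x, p), (p, x)) \<in> corners W" "3 \<le> length W"
    | (no_spur) "\<nexists>x p. ((x, p), (p, x)) \<in> corners W" "3 \<le> length W"
    using length_outer by force
  then show ?case
  proof cases
    case two
    then obtain x y where "W = [x, y]"
      by (auto simp: numeral_eq_Suc length_Suc_conv)
    then show ?thesis
      by (simp add: nullhom.nh_two)
  next
    case spur
    then obtain k R where W: "rotate k W = x # p # x # R" and "quad_map (x # R) F"
      and "card (map_darts (x # R) F) < card (map_darts W F)"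
      by (rule remove_spur)
    then have "nullhom (L x # map L R)"
      using less.hyps less.prems(2) by fastforce
    then have "nullhom (map L (rotate k W))"
      using nullhom.nh_step[of "L x" "map L R" 0 "L p"] W by simp
    then show ?thesis
      by (simp add: nullhom_rotate_iff flip: rotate_map)
  next
    case no_spur
    then obtain k x y R f j a b where W: "rotate k W = x # y # R" and f: "f \<in> F" "rotate j f = [y, x, a, b]"
      and "quad_map (x # a # b # y # R) (F - {f})"
      and "card (map_darts (x # a # b # y # R) (F - {f})) < card (map_darts W F)"
      by (rule absorb_face)
    then have "nullhom (L x # L a # L b # L y # map L R)"
      using less.hyps less.prems(2) by fastforce
    moreover have "L y = L a \<or> L x = L b"
      using diagonal_agrees_rotate[of f L j] quadrangle_faces less.prems(2) f
      by (simp add: diagonal_agrees_def)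
    ultimately have "nullhom (map L (rotate k W))"
      using nullhom_absorb_quadrangle W by simp
    then show ?thesis
      by (simp add: nullhom_rotate_iff flip: rotate_map)
  qed
qed

section \<open>Colourings of the patch extension\<close>

lemma four_coloring_wheel_diagonal:
  assumes "card S = 4" "{c, x0, x1, x2, x3} \<subseteq> S"
    and "x0 \<noteq> c" "x1 \<noteq> c" "x2 \<noteq> c" "x3 \<noteq> c" "x0 \<noteq> x1" "x1 \<noteq> x2" "x2 \<noteq> x3" "x3 \<noteq> x0"
  shows "x0 = x2 \<or> x1 = x3"
proof (rule ccontr)
  assume "\<not> ?thesis"
  then have "card {c, x0, x1, x2, x3} = 5"
    using assms(3-) by auto
  moreover have "card {c, x0, x1, x2, x3} \<le> card S"
    using assms(1,2) by (intro card_mono) (auto intro: card_ge_0_finite)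
  ultimately show False
    using assms(1) by simp
qed

lemma patch_coloring_diagonal_agrees:
  assumes "near_quadrangulation C Fs" "hue_bipartition C Fs h"
    and "four_coloring (patch_verts C Fs) (patch_adj C Fs) \<psi>" "f \<in> Fs"
  shows "diagonal_agrees (\<lambda>v. (h v, \<psi> (Inl v))) f"
proof -
  have "length f = 4"
    using assms(1,4) by (simp add: near_quadrangulation_def)
  then obtain f0 f1 f2 f3 where f: "f = [f0, f1, f2, f3]"
    unfolding length_4_conv by blast
  have "darts f = {(f0, f1), (f1, f2), (f2, f3), (f3, f0)}"
    by (auto simp: f darts_conv_dart_list dart_list_Cons)
  then have adj: "H_adj C Fs f0 f1" "H_adj C Fs f1 f2" "H_adj C Fs f2 f3" "H_adj C Fs f3 f0"
    using assms(4) by (auto simp: H_adj_def map_darts_conv)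
  have "set f \<subseteq> map_verts C Fs"
    using assms(4) by (auto simp: map_verts_conv)
  then have verts: "{f0, f1, f2, f3} \<subseteq> map_verts C Fs"
    by (simp add: f)
  have "h f0 \<in> {0, 1}" "h f1 \<in> {0, 1}" "h f2 \<in> {0, 1}" "h f3 \<in> {0, 1}"
    and "h f0 \<noteq> h f1" "h f1 \<noteq> h f2" "h f2 \<noteq> h f3"
    using assms(2) adj verts unfolding hue_bipartition_def by blast+
  then have "h f0 = h f2 \<and> h f1 = h f3"
    by auto
  moreover have "\<psi> (Inl f0) = \<psi> (Inl f2) \<or> \<psi> (Inl f1) = \<psi> (Inl f3)"
  proof (rule four_coloring_wheel_diagonal)
    have "{Inr f, Inl f0, Inl f1, Inl f2, Inl f3} \<subseteq> patch_verts C Fs"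
      using assms(4) verts by (auto simp: patch_verts_def)
    then show "{\<psi> (Inr f), \<psi> (Inl f0), \<psi> (Inl f1), \<psi> (Inl f2), \<psi> (Inl f3)} \<subseteq> {0, 1} \<times> {0, 1}"
      using assms(3) by (auto simp: four_coloring_def)
    show "\<psi> (Inl f0) \<noteq> \<psi> (Inr f)" "\<psi> (Inl f1) \<noteq> \<psi> (Inr f)" "\<psi> (Inl f2) \<noteq> \<psi> (Inr f)"
      "\<psi> (Inl f3) \<noteq> \<psi> (Inr f)" "\<psi> (Inl f0) \<noteq> \<psi> (Inl f1)" "\<psi> (Inl f1) \<noteq> \<psi> (Inl f2)"
      "\<psi> (Inl f2) \<noteq> \<psi> (Inl f3)" "\<psi> (Inl f3) \<noteq> \<psi> (Inl f0)"
      using assms(3,4) adj verts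
      by (auto simp: four_coloring_def patch_verts_def patch_adj_def f)
  qed (simp add: card_cartesian_product)
  ultimately show ?thesis
    by (auto simp: diagonal_agrees_def f)
qed

theorem corollary22:
  fixes C :: "'v list" and Fs :: "'v list set" and h :: "'v \<Rightarrow> int"
    and \<phi> :: "'v \<Rightarrow> int \<times> int" and \<psi> :: "('v + 'v list) \<Rightarrow> int \<times> int"
  assumes "near_quadrangulation C Fs"
    and "hue_bipartition C Fs h"
    and "four_coloring (set C) (cycle_adj C) \<phi>"
    and "viable (set C) (cycle_adj C) (\<lambda>v. patch_hue h (Inl v)) \<phi>"
    and "four_coloring (patch_verts C Fs) (patch_adj C Fs) \<psi>"
    and "\<forall>v\<in>set C. \<psi> (Inl v) = \<phi> v"
  shows "null_homotopic_on_cycle C (\<lambda>v. patch_hue h (Inl v)) \<phi>"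
  unfolding null_homotopic_on_cycle_def
proof (intro allI impI)
  fix g
  assume hom: "hom_to_T (set C) (cycle_adj C) (\<lambda>v. patch_hue h (Inl v)) \<phi> g"
  define L where "L v = (h v, \<psi> (Inl v))" for v
  have "nullhom (map L C)"
    using near_quadrangulation_quad_map[OF assms(1)] patch_coloring_diagonal_agrees[OF assms(1,2,5)]
    by (intro quad_map_nullhom) (auto simp: L_def [abs_def])
  moreover have "map T_label (map g C) = map L C"
    using hom_to_T_cycle(2)[OF hom] assms(6) by (simp add: L_def patch_hue_def)
  ultimately show "nullhom (map g C)"
    using nullhom_lift_T hom_to_T_cycle(1)[OF hom] by metis
qed

end
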